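(* Let $q\ge 1$ and $s\ge 0$ be integers and assume that the polynomials $L_0,\dots,L_q$ defined in the context are linearly independent. For $k=0,\dots,q$ and $m=0,\dots,2^s-1$ define $$e_{k,m}(z) = \frac{1}{\sqrt{(2k+1)2^s}}\, r_q^m(z2^{-s})\, D_q^{-1}(z2^{-s})\, L_k(z2^{-s}), \qquad \tilde e_{k,m}(z) = D_q^{2^s}(z2^{-s})\, e_{k,m}(z),$$ and $\Pi^m = \{\tilde e_{0,m},\tilde e_{1,m},\dots,\tilde e_{q,m}\}$. Then for each $m = 0,1,\dots,2^s-1$, the functions in $\Pi^m$ are linearly independent.
   Context: $N_q(z) = \sum_{j=0}^q \frac{(2q-j)!\,q!}{(2q)!\,j!\,(q-j)!} z^j$, $D_q(z) = N_q(-z)$, $r_q = N_q/D_q$ (diagonal Padé approximant of $e^z$). For scalar $z$ (not a zero of $D_q$), let $C_0(z),\dots,C_q(z)$ be the solution of the linear system, with $\tilde C_k = C_k/(2k+1)$, $\tilde C_{q+1}=0$: $\sum_{k=0}^q(-1)^k(2k+1)\tilde C_k = 1$ and, for $j=1,\dots,q$, $-z\tilde C_{j-1} + (4j+2)\tilde C_j + z\tilde C_{j+1} = 0$. These are rational functions of the form $C_k(z) = L_k(z)/D_q(z)$ with $L_k$ polynomials of degree at most $q$, and $\sum_k C_k(z) = r_q(z)$. (These are the coefficients of the Legendre–Petrov–Galerkin expansion $\sum_k C_k P_k(t)\approx e^{zt}$ on $[0,1]$.) *)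

theory Defs
  imports "HOL-Analysis.Analysis" "HOL-Computational_Algebra.Polynomial"
begin

text \<open>Numerator of the diagonal Pade approximant of exp:
  N_q(z) = sum_{j=0}^q (2q-j)! q! / ((2q)! j! (q-j)!) z^j.\<close>
definition Nq :: "nat \<Rightarrow> complex poly" where
  "Nq q = (\<Sum>j\<le>q. monom (fact (2*q - j) * fact q / (fact (2*q) * fact j * fact (q - j))) j)"

definition Dq :: "nat \<Rightarrow> complex poly" where
  "Dq q = pcompose (Nq q) [:0, -1:]"

definition rq :: "nat \<Rightarrow> complex \<Rightarrow> complex" where
  "rq q z = poly (Nq q) z / poly (Dq q) z"

text \<open>The solution C_0(z),...,C_q(z) of the linear system (with C_k = 0 for k > q,
  so that tilde C_{q+1} = 0), where tilde C_k = C_k/(2k+1).\<close>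
definition Csol :: "nat \<Rightarrow> complex \<Rightarrow> nat \<Rightarrow> complex" where
  "Csol q z = (THE C. (\<forall>k>q. C k = 0) \<and>
      (\<Sum>k\<le>q. (-1)^k * of_nat (2*k+1) * (C k / of_nat (2*k+1))) = 1 \<and>
      (\<forall>j\<in>{1..q}. - z * (C (j-1) / of_nat (2*(j-1)+1)) + of_nat (4*j+2) * (C j / of_nat (2*j+1))
                     + z * (C (j+1) / of_nat (2*(j+1)+1)) = 0))"

definition Lpoly :: "nat \<Rightarrow> nat \<Rightarrow> complex poly" where
  "Lpoly q k = (THE p. degree p \<le> q \<and>
      (\<forall>z. poly (Dq q) z \<noteq> 0 \<longrightarrow> Csol q z k = poly p z / poly (Dq q) z))"

definition ekm :: "nat \<Rightarrow> nat \<Rightarrow> nat \<Rightarrow> nat \<Rightarrow> complex \<Rightarrow> complex" where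
  "ekm q s k m z = (let w = z / 2^s in
     1 / complex_of_real (sqrt (real ((2*k+1) * 2^s))) * (rq q w)^m
       * inverse (poly (Dq q) w) * poly (Lpoly q k) w)"

definition etkm :: "nat \<Rightarrow> nat \<Rightarrow> nat \<Rightarrow> nat \<Rightarrow> complex \<Rightarrow> complex" where
  "etkm q s k m z = (poly (Dq q) (z / 2^s))^(2^s) * ekm q s k m z"

end

theory Submission
  imports Defs
begin

(* With w = z / 2^s, the function e~_{k,m}(z) equals L_k(w) times the factor D_q(w)^(2^s - 1) r_q(w)^m,
   which does not depend on k, and the nonzero constant 1/sqrt((2k+1) 2^s). A vanishing linear
   combination of the e~_{k,m} therefore makes the corresponding combination of the L_k vanish
   wherever N_q D_q does not, i.e. at all but finitely many points; so that combination is the zero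
   polynomial, and the assumed independence of the L_k forces all coefficients to vanish. *)

lemma poly_eq_0_if_vanishes_off_roots:
  fixes p r :: "'a :: {idom, ring_char_0} poly"
  assumes "p \<noteq> 0" and "\<And>x. poly p x \<noteq> 0 \<Longrightarrow> poly r x = 0"
  shows "r = 0"
proof -
  have "poly (r * p) x = 0" for x
    using assms(2) by (cases "poly p x = 0") auto
  then have "r * p = 0"
    using poly_all_0_iff_0 by blast
  with \<open>p \<noteq> 0\<close> show ?thesis
    by simp
qed

lemma poly_Nq_0: "poly (Nq q) 0 = 1"
proof -
  have "poly (Nq q) 0 = (\<Sum>j\<le>q. if j = 0
      then fact (2*q - j) * fact q / (fact (2*q) * fact j * fact (q - j)) else 0)"
    unfolding poly_0_coeff_0 Nq_def coeff_sum by (intro sum.cong) (auto simp: coeff_monom)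
  also have "\<dots> = 1"
    by (simp add: sum.delta)
  finally show ?thesis .
qed

lemma poly_Dq_0: "poly (Dq q) 0 = 1"
  by (simp add: Dq_def poly_pcompose poly_Nq_0)

lemma Nq_Dq_nonzero: "Nq q * Dq q \<noteq> 0"
  using poly_Nq_0[of q] poly_Dq_0[of q] by auto

definition ekm_scale :: "nat \<Rightarrow> nat \<Rightarrow> complex" where
  "ekm_scale s k = 1 / complex_of_real (sqrt (real ((2*k+1) * 2^s)))"

lemma ekm_scale_nonzero: "ekm_scale s k \<noteq> 0"
proof -
  have "real ((2*k+1) * 2^s) > 0"
    by (simp only: of_nat_0_less_iff) simp
  then show ?thesis
    unfolding ekm_scale_def by simp
qed

lemma sum_etkm_eq:
  fixes s :: nat and z :: complex
  defines "w \<equiv> z / 2^s"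
  shows "(\<Sum>k\<le>q. a k * etkm q s k m z) =
    poly (Dq q) w ^ 2^s * rq q w ^ m * inverse (poly (Dq q) w)
      * poly (\<Sum>k\<le>q. smult (a k * ekm_scale s k) (Lpoly q k)) w"
  unfolding etkm_def ekm_def w_def Let_def poly_sum ekm_scale_def
  by (simp add: sum_distrib_left algebra_simps)

theorem lemma3:
  fixes q s :: nat
  assumes "q \<ge> 1"
    and Lindep: "\<And>a :: nat \<Rightarrow> complex.
           (\<Sum>k\<le>q. smult (a k) (Lpoly q k)) = 0 \<Longrightarrow> \<forall>k\<le>q. a k = 0"
    and "m < 2^s"
  shows "\<forall>a :: nat \<Rightarrow> complex.
           (\<forall>z. poly (Dq q) (z / 2^s) \<noteq> 0 \<longrightarrow> (\<Sum>k\<le>q. a k * etkm q s k m z) = 0)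
           \<longrightarrow> (\<forall>k\<le>q. a k = 0)"
proof (rule allI, rule impI)
  fix a :: "nat \<Rightarrow> complex"
  assume vanish: "\<forall>z. poly (Dq q) (z / 2^s) \<noteq> 0 \<longrightarrow> (\<Sum>k\<le>q. a k * etkm q s k m z) = 0"
  have "(\<Sum>k\<le>q. smult (a k * ekm_scale s k) (Lpoly q k)) = 0"
  proof (rule poly_eq_0_if_vanishes_off_roots[OF Nq_Dq_nonzero])
    fix w
    assume "poly (Nq q * Dq q) w \<noteq> 0"
    moreover have "(\<Sum>k\<le>q. a k * etkm q s k m (w * 2^s)) = 0"
      using vanish \<open>poly (Nq q * Dq q) w \<noteq> 0\<close> by simp
    ultimately show "poly (\<Sum>k\<le>q. smult (a k * ekm_scale s k) (Lpoly q k)) w = 0"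
      using sum_etkm_eq[where z = "w * 2^s"] by (simp add: rq_def)
  qed
  then have "\<forall>k\<le>q. a k * ekm_scale s k = 0"
    by (rule Lindep)
  then show "\<forall>k\<le>q. a k = 0"
    using ekm_scale_nonzero by simp
qed

end
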